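(* Consider the following two-bidder sealed-bid first-price common-value auction with limit price $L\ge 0$. A single good has common value $v$, a random variable with CDF $F_v$, density $f_v$, support $\mathbb{R}_+$ and finite mean. Alice submits a (possibly randomized) bid $b_A\ge 0$ knowing only $F_v$. Then $v$ is realized; Bob observes $v$ (but not $b_A$) and submits a bid $\beta(v)\ge 0$. The highest bid wins and the winner pays their bid and receives payoff $v$ minus the bid (the loser gets $0$), except that if the highest bid is strictly below $L$ the good is unsold. Ties: if Alice's and Bob's bids are equal, Bob wins; if Bob's bid equals $L$ he can win; if the winning bid is Alice's and equals exactly $L$, the good is unsold. Assume $\mathbb{E}[v]>L$ and that there exists $\underline v$ in the support of $F_v$ with $$L=\mathbb{E}[\tilde v\mid \tilde v<\underline v],$$ where $\tilde v\sim F_v$. Define $$\beta_L(v)=\begin{cases}\mathbb{E}[\tilde v\mid \tilde v<v] & \text{if } v\ge \underline v,\\ L & \text{if } L<v<\underline v,\\ 0 & \text{if } v\le L.\end{cases}$$ Then the equilibrium (perfect Bayesian Nash equilibrium) bidding strategies are: Bob, upon observing $v$, bids $\beta_L(v)$; Alice uses the mixed strategy in which she draws a value $v'\sim F_v$ (independently of $v$) and bids $\beta_L(v')$.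
   Context: Bidders are risk neutral. $\tilde v$ denotes a generic random variable with CDF $F_v$; conditional expectations are with respect to $F_v$. *)

theory Defs
  imports "HOL-Probability.Probability"
begin

definition measure_support :: "real measure \<Rightarrow> real set" where
  "measure_support M = {x. \<forall>e>0. measure M (ball x e) > 0}"

text \<open>Conditional expectation E[v | v < u] under M (0/0 = 0 convention).\<close>
definition cond_exp_below :: "real measure \<Rightarrow> real \<Rightarrow> real" where
  "cond_exp_below M u = (LINT x:{..<u}|M. x) / measure M {..<u}"

definition beta_L :: "real measure \<Rightarrow> real \<Rightarrow> real \<Rightarrow> real \<Rightarrow> real" where
  "beta_L M L vl v =
     (if vl \<le> v then cond_exp_below M v else if L < v then L else 0)"

definition alice_payoff :: "real measure \<Rightarrow> real \<Rightarrow> (real \<Rightarrow> real) \<Rightarrow> real \<Rightarrow> real" where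
  "alice_payoff M L beta b =
     (\<integral>v. (if beta v < b \<and> L < b then v - b else 0) \<partial>M)"

definition bob_payoff :: "real \<Rightarrow> real measure \<Rightarrow> real \<Rightarrow> real \<Rightarrow> real" where
  "bob_payoff L G v c =
     (\<integral>b. (if b \<le> c \<and> L \<le> c then v - c else 0) \<partial>G)"

definition is_equilibrium ::
  "real measure \<Rightarrow> real \<Rightarrow> (real \<Rightarrow> real) \<Rightarrow> real measure \<Rightarrow> bool" where
  "is_equilibrium M L beta G \<longleftrightarrow>
     prob_space G \<and> sets G = sets borel \<and> (AE b in G. 0 \<le> b) \<and>
     beta \<in> borel_measurable borel \<and> (\<forall>v\<in>measure_support M. 0 \<le> beta v) \<and>
     (\<forall>b\<ge>0. alice_payoff M L beta b \<le> (\<integral>b'. alice_payoff M L beta b' \<partial>G)) \<and>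
     (\<forall>v\<in>measure_support M. \<forall>c\<ge>0. bob_payoff L G v c \<le> bob_payoff L G v (beta v))"

end

theory Submission
  imports Defs
begin

text \<open>
  Write m(u) = E[v | v < u]. As the value distribution is atomless with support [0, \<infinity>),
  m is strictly increasing on [0, \<infinity>) and m(u) \<le> u; hence beta_L is nondecreasing and
  every bid wins against a down-set of values, which is exhausted by sets {v. v < w}.

  Alice: a bid b > L wins on a down-set containing vl; on each {v. v < w} in it with w \<ge> vl
  her payoff is (m(w) - b) P(v < w) \<le> 0, so no bid earns more than 0. The bids beta_L(v')
  of her mixed strategy earn exactly 0: for v' \<ge> vl such a bid wins on {v. v < v'} at the
  price m(v'), and otherwise it does not exceed L.

  Bob: a bid c \<ge> L wins on a down-set containing vl, and on each {v'. v' < w} in it with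
  w \<ge> vl he earns at most what the bid m(w) = beta_L(w) would give, namely the integral of
  v - v' over {v' < w}. This is single-peaked in w with peak w = v, hence maximal over w \<ge> vl
  at max v vl, and beta_L(v) realises this maximum, or 0 if it is negative.
\<close>

lemma down_closed_real_cases:
  fixes T :: "real set"
  assumes down: "\<And>x y. y \<in> T \<Longrightarrow> x \<le> y \<Longrightarrow> x \<in> T" and "T \<noteq> {}"
  obtains "T = UNIV" | u where "T = {..<u}" | u where "T = {..u}"
proof (cases "bdd_above T")
  case True
  define u where "u = Sup T"
  have "x \<le> u" if "x \<in> T" for x
    using True that unfolding u_def by (simp add: cSup_upper)
  moreover have "x \<in> T" if "x < u" for x
    using that less_cSup_iff[OF \<open>T \<noteq> {}\<close> True] down unfolding u_def by (meson less_imp_le)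
  ultimately have "T = {..<u} \<or> T = {..u}"
    by (cases "u \<in> T") (auto simp: order.order_iff_strict)
  with that show ?thesis by blast
next
  case False
  have "x \<in> T" for x
    using False down unfolding bdd_above_def by (meson linear)
  with that show ?thesis by blast
qed

lemma measure_density_lborel_singleton:
  assumes "f \<in> borel_measurable borel"
  shows "measure (density lborel f) {x :: real} = 0"
proof -
  have "emeasure (density lborel f) {x} = (\<integral>\<^sup>+ y. f y * indicator {x} y \<partial>lborel)"
    using assms by (simp add: emeasure_density)
  also have "\<dots> = 0" by simp
  finally show ?thesis by (simp add: measure_def)
qed

locale value_distribution = prob_space M for M :: "real measure" +
  assumes sets_M [measurable_cong]: "sets M = sets borel"
    and atomless: "\<And>x. measure M {x} = 0"
    and support: "measure_support M = {0..}"
    and integrable_id: "integrable M (\<lambda>x. x)"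
begin

lemma set_integrable_id: "A \<in> sets borel \<Longrightarrow> set_integrable M A (\<lambda>x. x)"
  unfolding set_integrable_def using integrable_id by (intro integrable_mult_indicator) auto

lemma set_integrable_const_real: "A \<in> sets borel \<Longrightarrow> set_integrable M A (\<lambda>_. c :: real)"
  unfolding set_integrable_def by (intro integrable_mult_indicator) auto

lemma set_integral_const_real: "A \<in> sets borel \<Longrightarrow> (LINT x:A|M. c) = c * measure M A"
  by (subst set_integral_const) (auto simp: emeasure_eq_measure)

lemma set_integral_id_ge:
  "A \<in> sets borel \<Longrightarrow> (\<And>x. x \<in> A \<Longrightarrow> s \<le> x) \<Longrightarrow> s * measure M A \<le> (LINT x:A|M. x)"
  using set_integral_mono[of M A "\<lambda>_. s" "\<lambda>x. x"]
  by (simp add: set_integrable_id set_integrable_const_real set_integral_const_real)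

lemma set_integral_id_le:
  "A \<in> sets borel \<Longrightarrow> (\<And>x. x \<in> A \<Longrightarrow> x \<le> s) \<Longrightarrow> (LINT x:A|M. x) \<le> s * measure M A"
  using set_integral_mono[of M A "\<lambda>x. x" "\<lambda>_. s"]
  by (simp add: set_integrable_id set_integrable_const_real set_integral_const_real)

lemma set_integral_atMost_eq_lessThan:
  "(LINT x:{..u}|M. g x) = (LINT x:{..<u}|M. (g x :: real))"
  by (rule set_integral_discrete_difference[where X = "{u}"])
    (auto simp: emeasure_eq_measure atomless)

lemma measure_lessThan_split:
  "s \<le> t \<Longrightarrow> measure M {..<t} = measure M {..<s} + measure M {s..<t}"
proof -
  assume "s \<le> t"
  then have "{..<t} = {..<s} \<union> {s..<t}" by auto
  then show ?thesis using finite_measure_Union[of "{..<s}" "{s..<t}"] by (simp add: disjoint_iff)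
qed

lemma integral_lessThan_split:
  "s \<le> t \<Longrightarrow> (LINT x:{..<t}|M. x) = (LINT x:{..<s}|M. x) + (LINT x:{s..<t}|M. x)"
proof -
  assume "s \<le> t"
  then have "{..<t} = {..<s} \<union> {s..<t}" by auto
  then show ?thesis
    using set_integral_Un[of "{..<s}" "{s..<t}" M "\<lambda>x. x"] by (simp add: disjoint_iff set_integrable_id)
qed

lemma set_integral_lessThan_tendsto:
  fixes g :: "real \<Rightarrow> real"
  assumes "integrable M g" "incseq w"
  shows "(\<lambda>n. LINT x:{..<w n}|M. g x) \<longlonglongrightarrow> (LINT x:(\<Union>n. {..<w n})|M. g x)"
proof (rule set_integral_cont_up)
  have "(\<Union>n. {..<w n}) \<in> sets M" by measurable
  then show "set_integrable M (\<Union>n. {..<w n}) g"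
    unfolding set_integrable_def using assms(1) by (rule integrable_mult_indicator)
qed (use assms(2) in \<open>auto simp: incseq_def\<close>)

lemma set_integral_down_closed_le:
  fixes g :: "real \<Rightarrow> real"
  assumes g: "integrable M g"
    and down: "\<And>x y. y \<in> T \<Longrightarrow> x \<le> y \<Longrightarrow> x \<in> T" and "a \<in> T"
    and bound: "\<And>w. w \<in> T \<Longrightarrow> a \<le> w \<Longrightarrow> (LINT x:{..<w}|M. g x) \<le> K"
  shows "(LINT x:T|M. g x) \<le> K"
proof -
  have exhaustion: "(LINT x:T|M. g x) \<le> K"
    if w: "incseq w" "(\<Union>n. {..<w n}) = T" "\<And>n. w n \<in> T" for w :: "nat \<Rightarrow> real"
  proof -
    obtain N where "a < w N"
      using w(2) \<open>a \<in> T\<close> by auto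
    then have "a \<le> w n" if "N \<le> n" for n
      using incseqD[OF w(1) that] by simp
    then have "eventually (\<lambda>n. (LINT x:{..<w n}|M. g x) \<le> K) sequentially"
      unfolding eventually_sequentially using w(3) by (blast intro: bound)
    with set_integral_lessThan_tendsto[OF g w(1)] show ?thesis
      unfolding w(2) by (rule tendsto_upperbound) simp
  qed
  show ?thesis
  proof (rule down_closed_real_cases[OF down])
    show "T \<noteq> {}" using \<open>a \<in> T\<close> by auto
  next
    assume T: "T = UNIV"
    have "\<exists>n. x < real n" for x
      by (rule reals_Archimedean2)
    then show ?thesis
      by (intro exhaustion[of real]) (auto simp: T incseq_def)
  next
    fix u assume T: "T = {..<u}"
    have "\<exists>n. x < u - inverse (real (Suc n))" if "x < u" for x
      using reals_Archimedean[of "u - x"] that by (auto simp: algebra_simps)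
    moreover have "incseq (\<lambda>n. u - inverse (real (Suc n)))"
    proof (rule monoI)
      fix m n :: nat assume "m \<le> n"
      then have "inverse (real (Suc n)) \<le> inverse (real (Suc m))" by (simp add: le_imp_inverse_le)
      then show "u - inverse (real (Suc m)) \<le> u - inverse (real (Suc n))" by simp
    qed
    ultimately show ?thesis
      by (intro exhaustion) (auto simp: T intro: less_trans[of _ _ u])
  next
    fix u assume "T = {..u}"
    then show ?thesis
      using bound[of u] \<open>a \<in> T\<close> by (simp add: set_integral_atMost_eq_lessThan)
  qed
qed

lemma integral_lessThan_eq_cond_exp:
  "(LINT x:{..<t}|M. x) = cond_exp_below M t * measure M {..<t}"
proof (cases "measure M {..<t} = 0")
  case True
  then have "{..<t} \<in> null_sets M"
    by (simp add: null_sets_def emeasure_eq_measure)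
  then have "(LINT x:{..<t}|M. x) = (LINT x:{}|M. x)"
    by (intro set_integral_null_delta integrable_id) auto
  with True show ?thesis by (simp add: set_lebesgue_integral_def)
qed (simp add: cond_exp_below_def)

lemma set_integral_lessThan_diff:
  "(LINT x:{..<w}|M. x - b) = (cond_exp_below M w - b) * measure M {..<w}"
  by (simp add: set_integrable_id set_integrable_const_real set_integral_const_real
      integral_lessThan_eq_cond_exp algebra_simps)

lemma measure_atLeastLessThan_pos:
  assumes "0 \<le> r" "r < t"
  shows "0 < measure M {r..<t}"
proof -
  have "(r + t) / 2 \<in> measure_support M"
    using assms support by simp
  then have "0 < measure M (ball ((r + t) / 2) ((t - r) / 2))"
    using assms unfolding measure_support_def by simp
  also have "\<dots> \<le> measure M {r..<t}"
    by (intro finite_measure_mono) (auto simp: ball_eq_greaterThanLessThan field_simps)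
  finally show ?thesis .
qed

lemma cond_exp_below_le: "0 \<le> s \<Longrightarrow> cond_exp_below M s \<le> s"
  using set_integral_id_le[of "{..<s}" s]
  by (cases "measure M {..<s} = 0") (auto simp: cond_exp_below_def divide_le_eq less_le)

lemma integral_atLeastLessThan_gt:
  assumes "0 \<le> s" "s < t"
  shows "s * measure M {s..<t} < (LINT x:{s..<t}|M. x)"
proof -
  define r where "r = (s + t) / 2"
  have r: "s < r" "r < t"
    using assms by (auto simp: r_def)
  have "measure M {s..<t} = measure M {s..<r} + measure M {r..<t}"
    using measure_lessThan_split[of s t] measure_lessThan_split[of s r] measure_lessThan_split[of r t] r
    by simp
  then have "s * measure M {s..<t} = s * measure M {s..<r} + s * measure M {r..<t}"
    by (simp add: distrib_left)
  also have "\<dots> < s * measure M {s..<r} + r * measure M {r..<t}"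
    using measure_atLeastLessThan_pos[of r t] r assms by simp
  also have "\<dots> \<le> (LINT x:{s..<r}|M. x) + (LINT x:{r..<t}|M. x)"
    by (intro add_mono set_integral_id_ge) auto
  also have "\<dots> = (LINT x:{s..<t}|M. x)"
    using integral_lessThan_split[of s t] integral_lessThan_split[of s r] integral_lessThan_split[of r t] r
    by simp
  finally show ?thesis .
qed

lemma strict_mono_on_cond_exp_below: "strict_mono_on {0..} (cond_exp_below M)"
proof (rule strict_mono_onI)
  fix s t :: real
  assume "s \<in> {0..}" "s < t"
  then have s: "0 \<le> s" by simp
  define D where "D = measure M {s..<t}"
  define J where "J = (LINT x:{s..<t}|M. x)"
  have "0 < D"
    unfolding D_def using measure_atLeastLessThan_pos s \<open>s < t\<close> .
  have F: "measure M {..<t} = measure M {..<s} + D"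
    unfolding D_def using measure_lessThan_split \<open>s < t\<close> by simp
  have "cond_exp_below M s * measure M {..<t} = (LINT x:{..<s}|M. x) + cond_exp_below M s * D"
    by (simp add: F integral_lessThan_eq_cond_exp algebra_simps)
  also have "\<dots> \<le> (LINT x:{..<s}|M. x) + s * D"
    using cond_exp_below_le[OF s] \<open>0 < D\<close> by simp
  also have "\<dots> < (LINT x:{..<s}|M. x) + J"
    unfolding D_def J_def using integral_atLeastLessThan_gt s \<open>s < t\<close> by simp
  also have "\<dots> = cond_exp_below M t * measure M {..<t}"
    unfolding J_def using integral_lessThan_split[of s t] \<open>s < t\<close>
    by (simp add: integral_lessThan_eq_cond_exp)
  finally show "cond_exp_below M s < cond_exp_below M t"
    using \<open>0 < D\<close> F by (simp add: mult_less_cancel_right)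
qed

lemma cond_exp_below_le_iff:
  "0 \<le> s \<Longrightarrow> 0 \<le> t \<Longrightarrow> cond_exp_below M s \<le> cond_exp_below M t \<longleftrightarrow> s \<le> t"
  by (rule strict_mono_on_less_eq[OF strict_mono_on_cond_exp_below]) auto

lemma cond_exp_below_less_iff:
  "0 \<le> s \<Longrightarrow> 0 \<le> t \<Longrightarrow> cond_exp_below M s < cond_exp_below M t \<longleftrightarrow> s < t"
  by (rule strict_mono_on_less[OF strict_mono_on_cond_exp_below]) auto

text \<open>Bob's payoff, with value v, from beating exactly the values below w at the price
  E[v' | v' < w]; for w \<ge> vl this is what the bid beta_L(w) earns him.\<close>

definition mimic_payoff :: "real \<Rightarrow> real \<Rightarrow> real" where
  "mimic_payoff v w = v * measure M {..<w} - (LINT x:{..<w}|M. x)"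

lemma mimic_payoff_eq_cond_exp:
  "mimic_payoff v w = (v - cond_exp_below M w) * measure M {..<w}"
  by (simp add: mimic_payoff_def integral_lessThan_eq_cond_exp algebra_simps)

lemma mimic_payoff_mono:
  assumes "w \<le> w'" "w' \<le> v"
  shows "mimic_payoff v w \<le> mimic_payoff v w'"
proof -
  have "(LINT x:{w..<w'}|M. x) \<le> v * measure M {w..<w'}"
    using assms by (intro set_integral_id_le) auto
  then show ?thesis
    using measure_lessThan_split[OF assms(1)] integral_lessThan_split[OF assms(1)]
    by (simp add: mimic_payoff_def algebra_simps)
qed

lemma mimic_payoff_antimono:
  assumes "v \<le> w" "w \<le> w'"
  shows "mimic_payoff v w' \<le> mimic_payoff v w"
proof -
  have "v * measure M {w..<w'} \<le> (LINT x:{w..<w'}|M. x)"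
    using assms by (intro set_integral_id_ge) auto
  then show ?thesis
    using measure_lessThan_split[OF assms(2)] integral_lessThan_split[OF assms(2)]
    by (simp add: mimic_payoff_def algebra_simps)
qed

lemma mimic_payoff_le_max: "a \<le> w \<Longrightarrow> mimic_payoff v w \<le> mimic_payoff v (max v a)"
  using mimic_payoff_mono[of w v v] mimic_payoff_antimono[of v "max v a" w]
  by (cases "w \<le> v") (auto simp: max_def)

end

locale limit_price_auction = value_distribution +
  fixes L vl :: real
  assumes L_nonneg: "0 \<le> L" and vl_nonneg: "0 \<le> vl" and L_eq: "L = cond_exp_below M vl"
begin

abbreviation bid :: "real \<Rightarrow> real" where
  "bid \<equiv> beta_L M L vl"

abbreviation alice_strategy :: "real measure" where
  "alice_strategy \<equiv> distr M borel bid"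

lemma bid_eq_cond_exp: "vl \<le> v \<Longrightarrow> bid v = cond_exp_below M v"
  by (simp add: beta_L_def)

lemma bid_le_L: "v < vl \<Longrightarrow> bid v \<le> L"
  using L_nonneg by (simp add: beta_L_def)

lemma L_le_cond_exp: "vl \<le> v \<Longrightarrow> L \<le> cond_exp_below M v"
  using L_eq vl_nonneg cond_exp_below_le_iff by simp

lemma bid_nonneg: "0 \<le> bid v"
  using L_nonneg L_le_cond_exp[of v] by (auto simp: beta_L_def)

lemma bid_le_cond_exp_iff: "vl \<le> v \<Longrightarrow> bid w \<le> cond_exp_below M v \<longleftrightarrow> w \<le> v"
  using bid_le_L[of w] L_le_cond_exp[of v] vl_nonneg
  by (cases "vl \<le> w") (auto simp: bid_eq_cond_exp cond_exp_below_le_iff)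

lemma bid_less_cond_exp_iff:
  "vl \<le> v \<Longrightarrow> L < cond_exp_below M v \<Longrightarrow> bid w < cond_exp_below M v \<longleftrightarrow> w < v"
  using bid_le_L[of w] vl_nonneg
  by (cases "vl \<le> w") (auto simp: bid_eq_cond_exp cond_exp_below_less_iff)

lemma mono_bid: "mono bid"
proof (rule monoI)
  fix v w :: real
  assume "v \<le> w"
  then show "bid v \<le> bid w"
    using bid_le_cond_exp_iff[of w v] bid_le_L[of v] L_nonneg
    by (cases "vl \<le> w") (auto simp: beta_L_def)
qed

lemma bid_measurable [measurable]: "bid \<in> borel_measurable borel"
  by (rule borel_measurable_mono[OF mono_bid])

lemma alice_payoff_eq:
  "alice_payoff M L bid b = (if L < b then LINT w:{w. bid w < b}|M. w - b else 0)"
  unfolding alice_payoff_def set_lebesgue_integral_def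
  by (auto intro!: Bochner_Integration.integral_cong simp: indicator_def)

lemma alice_payoff_nonpos: "alice_payoff M L bid b \<le> 0"
proof (cases "L < b")
  case True
  have "(LINT w:{w. bid w < b}|M. w - b) \<le> 0"
  proof (rule set_integral_down_closed_le[where a = vl])
    show "integrable M (\<lambda>x. x - b)"
      using integrable_id by simp
    show "x \<in> {w. bid w < b}" if "y \<in> {w. bid w < b}" "x \<le> y" for x y
      using that monoD[OF mono_bid, of x y] by simp
    show "vl \<in> {w. bid w < b}"
      using True L_eq bid_eq_cond_exp[of vl] by simp
    fix w assume "w \<in> {w. bid w < b}" "vl \<le> w"
    then have "cond_exp_below M w - b \<le> 0"
      using bid_eq_cond_exp by simp
    then show "(LINT x:{..<w}|M. x - b) \<le> 0"
      by (simp add: set_integral_lessThan_diff mult_nonpos_nonneg)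
  qed
  with True show ?thesis by (simp add: alice_payoff_eq)
qed (simp add: alice_payoff_eq)

lemma alice_payoff_bid: "alice_payoff M L bid (bid v) = 0"
proof (cases "L < bid v")
  case True
  then have "vl \<le> v"
    using bid_le_L[of v] by linarith
  then have "{w. bid w < bid v} = {..<v}"
    using True bid_less_cond_exp_iff by (auto simp: bid_eq_cond_exp)
  with True \<open>vl \<le> v\<close> show ?thesis
    by (simp add: alice_payoff_eq set_integral_lessThan_diff bid_eq_cond_exp)
qed (simp add: alice_payoff_eq)

lemma alice_expected_payoff: "(\<integral>b. alice_payoff M L bid b \<partial>alice_strategy) = 0"
proof (cases "integrable alice_strategy (alice_payoff M L bid)")
  case True
  then have "alice_payoff M L bid \<in> borel_measurable borel"
    using borel_measurable_integrable measurable_cong_sets by fastforce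
  then show ?thesis
    by (simp add: integral_distr alice_payoff_bid)
qed (rule not_integrable_integral_eq) \<comment> \<open>a non-integrable payoff has Bochner integral 0\<close>

lemma bob_payoff_eq:
  "bob_payoff L alice_strategy v c = (if L \<le> c then LINT w:{w. bid w \<le> c}|M. v - c else 0)"
proof -
  have "bob_payoff L alice_strategy v c = (\<integral>w. (if bid w \<le> c \<and> L \<le> c then v - c else 0) \<partial>M)"
    unfolding bob_payoff_def by (rule integral_distr) measurable
  moreover have "(\<lambda>w. if bid w \<le> c \<and> L \<le> c then v - c else 0) = (\<lambda>w. indicator {w. bid w \<le> c} w *\<^sub>R (v - c))"
    if "L \<le> c"
    using that by (auto simp: indicator_def)
  ultimately show ?thesis
    by (simp add: set_lebesgue_integral_def)
qed

lemma bob_payoff_le_mimic: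
  assumes "L \<le> c"
  shows "bob_payoff L alice_strategy v c \<le> mimic_payoff v (max v vl)"
proof -
  have "(LINT w:{w. bid w \<le> c}|M. v - c) \<le> mimic_payoff v (max v vl)"
  proof (rule set_integral_down_closed_le[where a = vl])
    show "x \<in> {w. bid w \<le> c}" if "y \<in> {w. bid w \<le> c}" "x \<le> y" for x y
      using that monoD[OF mono_bid, of x y] by simp
    show "vl \<in> {w. bid w \<le> c}"
      using assms L_eq bid_eq_cond_exp[of vl] by simp
    fix w assume "w \<in> {w. bid w \<le> c}" "vl \<le> w"
    then have "cond_exp_below M w \<le> c"
      using bid_eq_cond_exp by simp
    then have "(v - c) * measure M {..<w} \<le> mimic_payoff v w"
      by (simp add: mimic_payoff_eq_cond_exp mult_right_mono)
    also have "\<dots> \<le> mimic_payoff v (max v vl)"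
      using \<open>vl \<le> w\<close> by (rule mimic_payoff_le_max)
    finally show "(LINT x:{..<w}|M. v - c) \<le> mimic_payoff v (max v vl)"
      by (simp add: set_integral_const_real)
  qed simp
  with assms show ?thesis by (simp add: bob_payoff_eq)
qed

lemma bob_payoff_bid:
  assumes "0 \<le> v"
  shows "bob_payoff L alice_strategy v (bid v) = max 0 (mimic_payoff v (max v vl))"
proof -
  consider "vl \<le> v" | "L < v" "v < vl" | "v \<le> L" "v < vl"
    by linarith
  then show ?thesis
  proof cases
    case 1
    then have "{w. bid w \<le> bid v} = {..v}"
      using bid_le_cond_exp_iff by (auto simp: bid_eq_cond_exp)
    moreover have "0 \<le> mimic_payoff v v"
      using cond_exp_below_le[OF assms] by (simp add: mimic_payoff_eq_cond_exp)
    ultimately show ?thesis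
      using 1 L_le_cond_exp[OF 1]
      by (simp add: bob_payoff_eq bid_eq_cond_exp set_integral_atMost_eq_lessThan
          set_integral_const_real mimic_payoff_eq_cond_exp)
  next
    case 2
    then have "bid v = L"
      by (simp add: beta_L_def)
    moreover have "{w. bid w \<le> L} = {..vl}"
      using bid_le_cond_exp_iff[of vl] L_eq by auto
    moreover have "mimic_payoff v vl = (v - L) * measure M {..<vl}"
      by (simp add: mimic_payoff_eq_cond_exp L_eq)
    moreover have "0 \<le> (v - L) * measure M {..<vl}"
      using 2 by simp
    ultimately show ?thesis
      using 2 by (simp add: bob_payoff_eq set_integral_atMost_eq_lessThan set_integral_const_real)
  next
    case 3
    then have "bid v = 0"
      by (simp add: beta_L_def)
    moreover have "v = 0" if "L \<le> 0"
      using 3 assms that by linarith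
    ultimately have "bob_payoff L alice_strategy v (bid v) = 0"
      by (cases "L \<le> 0") (simp_all add: bob_payoff_eq)
    moreover have "mimic_payoff v vl \<le> 0"
      using 3 L_eq by (simp add: mimic_payoff_eq_cond_exp mult_nonpos_nonneg)
    ultimately show ?thesis
      using 3 by simp
  qed
qed

lemma bob_payoff_le_bid:
  "0 \<le> v \<Longrightarrow> bob_payoff L alice_strategy v c \<le> bob_payoff L alice_strategy v (bid v)"
  using bob_payoff_le_mimic[of c v] bob_payoff_bid[of v] by (cases "L \<le> c") (auto simp: bob_payoff_eq)


theorem is_equilibrium_beta_L: "is_equilibrium M L bid alice_strategy"
  unfolding is_equilibrium_def
proof (intro conjI ballI allI impI)
  show "prob_space alice_strategy"
    by (rule prob_space_distr) simp
  show "AE b in alice_strategy. 0 \<le> b"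
    by (subst AE_distr_iff) (auto simp: bid_nonneg)
  show "alice_payoff M L bid b \<le> (\<integral>b'. alice_payoff M L bid b' \<partial>alice_strategy)" for b
    using alice_payoff_nonpos alice_expected_payoff by simp
  show "bob_payoff L alice_strategy v c \<le> bob_payoff L alice_strategy v (bid v)"
    if "v \<in> measure_support M" for v c
    using that support by (intro bob_payoff_le_bid) simp
qed (simp_all add: bid_nonneg)

end

theorem theorem1:
  fixes M :: "real measure" and f :: "real \<Rightarrow> ennreal" and L vl :: real
  assumes f_meas: "f \<in> borel_measurable borel"
    and M_dens: "M = density lborel f"
    and prob: "prob_space M"
    and supp: "measure_support M = {0..}"
    and mean: "integrable M (\<lambda>x. x)"
    and L_nonneg: "0 \<le> L"
    and mean_gt: "(\<integral>x. x \<partial>M) > L"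
    and vl_supp: "vl \<in> measure_support M"
    and vl_def: "L = cond_exp_below M vl"
  shows "is_equilibrium M L (beta_L M L vl) (distr M borel (beta_L M L vl))"
proof -
  have "sets M = sets borel" "0 \<le> vl" "\<And>x. measure M {x} = 0"
    using M_dens f_meas vl_supp supp by (auto simp: measure_density_lborel_singleton)
  then interpret limit_price_auction M L vl
    using prob supp mean L_nonneg vl_def
    by (intro limit_price_auction.intro value_distribution.intro value_distribution_axioms.intro
        limit_price_auction_axioms.intro)
  show ?thesis
    by (rule is_equilibrium_beta_L)
qed

end
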